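(* The Lie subalgebra $\Lambda_1(\mathbb{Q}\mathrm{Tree}_2)=\bigoplus_{m\ge2}\mathbb{Q}\mathrm{Tree}_2((m))$ of $\Lambda(\mathbb{Q}\mathrm{Tree}_2^-)$ is not finitely generated.
   Context: $\mathrm{Tree}_2((m))$, $m\ge1$, is the set of planar binary rooted trees with one root and $m$ leaves labeled $1,\dots,m$ from left to right, equivalently full parenthesizations of $12\cdots m$; $\mathrm{Tree}_2((1))=\{1\}$. Composition $S\circ_iT$ grafts the root of $T$ onto the $i$-th leaf of $S$. The operad $\mathrm{Tree}_2^-$ has $\mathrm{Tree}_2^-((0))=\{\circ\}$, $\mathrm{Tree}_2^-((m))=\mathrm{Tree}_2((m))$ for $m\ge1$, and $c\circ_i\circ=\partial_ic$, where $\partial_ic$ erases the $i$-th leaf of $c$ (and $\partial_1 1=\circ$). For a nonsymmetric operad of sets $\mathcal{C}$, $\Lambda(\mathbb{Q}\mathcal{C})=\bigoplus_{m\ge0}\mathbb{Q}\mathcal{C}((m))$ with bracket $[c,d]=\sum_{t=1}^{j}d\circ_tc-\sum_{s=1}^{k}c\circ_sd$ for $c\in\mathcal{C}((k))$, $d\in\mathcal{C}((j))$. *)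

theory Defs
  imports Complex_Main "HOL-Library.Poly_Mapping"
begin

text \<open>Planar binary rooted trees (full parenthesizations); Leaf is the tree 1
with one leaf. Leaves are numbered 1..m from left to right.\<close>
datatype tree = Leaf | Node tree tree

fun leaves :: "tree \<Rightarrow> nat" where
  "leaves Leaf = 1"
| "leaves (Node l r) = leaves l + leaves r"

text \<open>graft S i T = S \<circ>_i T: graft the root of T onto the i-th leaf of S (1 \<le> i \<le> leaves S).\<close>
fun graft :: "tree \<Rightarrow> nat \<Rightarrow> tree \<Rightarrow> tree" where
  "graft Leaf i T = (if i = 1 then T else Leaf)"
| "graft (Node l r) i T =
     (if i \<le> leaves l then Node (graft l i T) r else Node l (graft r (i - leaves l) T))"

type_synonym vec = "tree \<Rightarrow>\<^sub>0 rat"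

definition smul :: "rat \<Rightarrow> vec \<Rightarrow> vec" where
  "smul a x = Poly_Mapping.map (\<lambda>v. a * v) x"

definition br_basis :: "tree \<Rightarrow> tree \<Rightarrow> vec" where
  "br_basis c d =
     (\<Sum>t\<in>{1..leaves d}. Poly_Mapping.single (graft d t c) 1)
   - (\<Sum>s\<in>{1..leaves c}. Poly_Mapping.single (graft c s d) 1)"

definition lie_br :: "vec \<Rightarrow> vec \<Rightarrow> vec" where
  "lie_br x y = (\<Sum>c\<in>Poly_Mapping.keys x. \<Sum>d\<in>Poly_Mapping.keys y.
      smul (Poly_Mapping.lookup x c * Poly_Mapping.lookup y d) (br_basis c d))"

definition Lambda1 :: "vec set" where
  "Lambda1 = {x. \<forall>c\<in>Poly_Mapping.keys x. 2 \<le> leaves c}"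

inductive_set lie_gen :: "vec set \<Rightarrow> vec set" for S :: "vec set" where
  gen: "x \<in> S \<Longrightarrow> x \<in> lie_gen S"
| zero: "0 \<in> lie_gen S"
| add: "x \<in> lie_gen S \<Longrightarrow> y \<in> lie_gen S \<Longrightarrow> x + y \<in> lie_gen S"
| smul: "x \<in> lie_gen S \<Longrightarrow> smul a x \<in> lie_gen S"
| bracket: "x \<in> lie_gen S \<Longrightarrow> y \<in> lie_gen S \<Longrightarrow> lie_br x y \<in> lie_gen S"

end

theory Submission
  imports Defs
begin

text \<open>Call a tree a left comb if every right subtree is a leaf. Grafting a tree with at least
two leaves produces a left comb only at the first leaf of a left comb, and
\<open>d \<circ>\<^sub>1 c = c \<circ>\<^sub>1 d\<close> for left combs \<open>c, d\<close>, since both are the left comb with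
\<open>|c| + |d| - 1\<close> leaves. Hence in the bracket of two elements of \<open>\<Lambda>\<^sub>1\<close> the two terms
contributing to a left comb cancel, and every left comb has coefficient zero in every
bracket. A finite set of generators therefore misses all left combs of large size, and so does
the Lie subalgebra it generates, whereas \<open>\<Lambda>\<^sub>1\<close> contains them all.\<close>

fun left_comb :: "tree \<Rightarrow> bool" where
  "left_comb Leaf = True"
| "left_comb (Node l r) = (left_comb l \<and> r = Leaf)"

fun comb :: "nat \<Rightarrow> tree" where
  "comb 0 = Leaf"
| "comb (Suc n) = Node (comb n) Leaf"

lemma leaves_ge_1: "1 \<le> leaves t"
  by (induction t) auto

lemma leaves_ge_2_iff: "2 \<le> leaves t \<longleftrightarrow> t \<noteq> Leaf"
proof (cases t)
  case (Node l r)
  then show ?thesis using leaves_ge_1[of l] leaves_ge_1[of r] by simp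
qed simp

lemma leaves_graft:
  "1 \<le> i \<Longrightarrow> i \<le> leaves d \<Longrightarrow> leaves (graft d i c) = leaves d + leaves c - 1"
  by (induction d arbitrary: i) (auto simp: leaves_ge_1)

lemma graft_neq_Leaf: "c \<noteq> Leaf \<Longrightarrow> 1 \<le> i \<Longrightarrow> i \<le> leaves d \<Longrightarrow> graft d i c \<noteq> Leaf"
  by (induction d arbitrary: i) auto

lemma left_comb_graft:
  assumes "c \<noteq> Leaf" "1 \<le> i" "i \<le> leaves d"
  shows "left_comb (graft d i c) \<longleftrightarrow> i = 1 \<and> left_comb d \<and> left_comb c"
  using assms
proof (induction d arbitrary: i)
  case Leaf
  then show ?case by simp
next
  case (Node l r)
  show ?case
  proof (cases "i \<le> leaves l")
    case True
    then show ?thesis using Node by auto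
  next
    case False
    then have "graft r (i - leaves l) c \<noteq> Leaf" "i \<noteq> 1"
      using graft_neq_Leaf[of c "i - leaves l" r] Node.prems leaves_ge_1[of l] by auto
    with False show ?thesis by simp
  qed
qed

lemma left_comb_eqI: "left_comb a \<Longrightarrow> left_comb b \<Longrightarrow> leaves a = leaves b \<Longrightarrow> a = b"
proof (induction a arbitrary: b)
  case Leaf
  then show ?case using leaves_ge_2_iff[of b] by auto
next
  case (Node l r)
  then show ?case using leaves_ge_1[of l] by (cases b) auto
qed

lemma graft_first_left_comb_commute:
  assumes "left_comb c" "left_comb d" "c \<noteq> Leaf" "d \<noteq> Leaf"
  shows "graft d 1 c = graft c 1 d"
  using assms left_comb_graft[of c 1 d] left_comb_graft[of d 1 c]
    leaves_graft[of 1 d c] leaves_graft[of 1 c d] leaves_ge_1[of c] leaves_ge_1[of d]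
  by (intro left_comb_eqI) auto

lemma lookup_graft_sum_left_comb:
  assumes "c \<noteq> Leaf" "left_comb u"
  shows "Poly_Mapping.lookup (\<Sum>t\<in>{1..leaves d}. Poly_Mapping.single (graft d t c) 1) u
           = (if left_comb c \<and> left_comb d \<and> graft d 1 c = u then 1 else (0::rat))"
    (is "_ = ?v")
proof -
  have "Poly_Mapping.lookup (Poly_Mapping.single (graft d t c) 1) u = (if t = 1 then ?v else 0)"
    if t: "t \<in> {1..leaves d}" for t
  proof (cases "graft d t c = u")
    case True
    then have "left_comb (graft d t c)" using assms(2) by simp
    then have "t = 1 \<and> left_comb d \<and> left_comb c"
      using left_comb_graft[OF assms(1)] t by simp
    with True show ?thesis by (simp add: lookup_single)
  next
    case False
    then show ?thesis by (auto simp: lookup_single)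
  qed
  then have "Poly_Mapping.lookup (\<Sum>t\<in>{1..leaves d}. Poly_Mapping.single (graft d t c) 1) u
      = (\<Sum>t\<in>{1..leaves d}. if t = 1 then ?v else 0)"
    unfolding lookup_sum by (rule sum.cong[OF refl])
  also have "\<dots> = ?v"
    using leaves_ge_1[of d] by (simp add: sum.delta)
  finally show ?thesis .
qed

lemma lookup_br_basis_left_comb:
  assumes "c \<noteq> Leaf" "d \<noteq> Leaf" "left_comb u"
  shows "Poly_Mapping.lookup (br_basis c d) u = 0"
  unfolding br_basis_def lookup_minus
    lookup_graft_sum_left_comb[OF \<open>c \<noteq> Leaf\<close> \<open>left_comb u\<close>]
    lookup_graft_sum_left_comb[OF \<open>d \<noteq> Leaf\<close> \<open>left_comb u\<close>]
  using assms graft_first_left_comb_commute[of c d] by auto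

lemma lookup_smul: "Poly_Mapping.lookup (smul a x) k = a * Poly_Mapping.lookup x k"
  unfolding smul_def by transfer (simp add: when_def)

lemma Lambda1_iff_lookup_Leaf: "x \<in> Lambda1 \<longleftrightarrow> Poly_Mapping.lookup x Leaf = 0"
  by (auto simp: Lambda1_def leaves_ge_2_iff in_keys_iff)

lemma lookup_lie_br_left_comb:
  assumes "x \<in> Lambda1" "y \<in> Lambda1" "left_comb u"
  shows "Poly_Mapping.lookup (lie_br x y) u = 0"
  using assms lookup_br_basis_left_comb
  by (auto simp: lie_br_def lookup_sum lookup_smul Lambda1_def leaves_ge_2_iff intro!: sum.neutral)

lemma lie_br_Lambda1: "x \<in> Lambda1 \<Longrightarrow> y \<in> Lambda1 \<Longrightarrow> lie_br x y \<in> Lambda1"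
  using lookup_lie_br_left_comb[of x y Leaf] by (simp add: Lambda1_iff_lookup_Leaf)

lemma lie_gen_subset_Lambda1:
  assumes "S \<subseteq> Lambda1"
  shows "lie_gen S \<subseteq> Lambda1"
proof
  fix x assume "x \<in> lie_gen S"
  then show "x \<in> Lambda1"
  proof (induction rule: lie_gen.induct)
    case (bracket x y)
    show ?case using bracket.IH by (rule lie_br_Lambda1)
  qed (use assms in \<open>auto simp: Lambda1_iff_lookup_Leaf lookup_add lookup_smul\<close>)
qed

lemma lie_gen_lookup_left_comb:
  assumes "S \<subseteq> Lambda1" "left_comb u" "\<forall>s\<in>S. Poly_Mapping.lookup s u = 0"
    and "x \<in> lie_gen S"
  shows "Poly_Mapping.lookup x u = 0"
  using assms(4)
proof (induction rule: lie_gen.induct)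
  case (bracket x y)
  have "x \<in> Lambda1" "y \<in> Lambda1"
    using bracket.hyps lie_gen_subset_Lambda1[OF assms(1)] by auto
  then show ?case using \<open>left_comb u\<close> by (rule lookup_lie_br_left_comb)
qed (use assms in \<open>auto simp: lookup_add lookup_smul\<close>)

lemma left_comb_comb: "left_comb (comb n)"
  by (induction n) auto

lemma leaves_comb: "leaves (comb n) = n + 1"
  by (induction n) auto

lemma inj_comb: "inj comb"
  by (rule injI) (metis leaves_comb add_right_cancel)

lemma exists_left_comb_not_in:
  assumes "finite K"
  obtains u where "left_comb u" "u \<noteq> Leaf" "u \<notin> K"
proof -
  have "finite (comb -` insert Leaf K)"
    using assms inj_comb by (simp add: finite_vimageI)
  then obtain n where "comb n \<notin> insert Leaf K"
    using ex_new_if_finite[OF infinite_UNIV_nat] by blast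
  then show thesis using that left_comb_comb by blast
qed

theorem corollary5p3:
  shows "\<not> (\<exists>S. finite S \<and> S \<subseteq> Lambda1 \<and> lie_gen S = Lambda1)"
proof
  assume "\<exists>S. finite S \<and> S \<subseteq> Lambda1 \<and> lie_gen S = Lambda1"
  then obtain S where S: "finite S" "S \<subseteq> Lambda1" "lie_gen S = Lambda1" by blast
  then have "finite (\<Union>s\<in>S. Poly_Mapping.keys s)" by simp
  then obtain u where u: "left_comb u" "u \<noteq> Leaf" "u \<notin> (\<Union>s\<in>S. Poly_Mapping.keys s)"
    by (rule exists_left_comb_not_in)
  have "\<forall>s\<in>S. Poly_Mapping.lookup s u = 0"
    using u(3) by (auto simp: in_keys_iff)
  moreover have "Poly_Mapping.single u (1::rat) \<in> lie_gen S"
    using u(2) S(3) by (simp add: Lambda1_iff_lookup_Leaf lookup_single)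
  ultimately have "Poly_Mapping.lookup (Poly_Mapping.single u (1::rat)) u = 0"
    by (rule lie_gen_lookup_left_comb[OF S(2) u(1)])
  then show False by simp
qed

end
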